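(* Let $V$ be a finite nonempty set, $c\in\mathbb{R}^{P_V}$, $\hat x$ a maximally specific partial function on $P_V$, $U\subseteq V$, $\hat x'=\hat x|_{P_U}$, $c'=c|_{P_U}$, $ij\in P_U\setminus\operatorname{dom}(\hat x)$, $b\in\{0,1\}$, and $y\in\operatorname{argmax}\{\varphi_{c'}(x')\mid x'\in X_U[\hat x'],\ x'_{ij}=b\}$. Let $\tau\colon X_V[\hat x]\to X_V[\hat x]$ be a map such that $\tau(x)|_{P_{V\setminus U}}=x|_{P_{V\setminus U}}$ and $\tau(x)|_{P_U}=y$ for every $x\in X_V[\hat x]$. Let $\mathrm{lb},\mathrm{ub},\mathrm{ub}'\in\mathbb{R}$ satisfy $\mathrm{lb}\le\max\{\varphi_{c'}(x)\mid x\in X_U[\hat x'],\ x_{ij}=b\}$, $\mathrm{ub}\ge\max\{\varphi_{c'}(x)\mid x\in X_U[\hat x'],\ x_{ij}=1-b\}$, and $\mathrm{ub}'\ge\max\{\sum_{pq\in\delta(U)}c_{pq}(x_{pq}-\tau(x)_{pq})\mid x\in X_V[\hat x],\ x_{ij}=1-b\}$. If $\mathrm{lb}-\mathrm{ub}\ge\mathrm{ub}'$, then there is a maximizer $x^*$ of $\varphi_c$ over $X_V[\hat x]$ with $x^*_{ij}=b$.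
   Context: For a finite set $W$, $P_W=\{pq\in W^2\mid p\neq q\}$ and $X_W$ is the set of $x\in\{0,1\}^{P_W}$ with $x_{pq}+x_{qr}-x_{pr}\le 1$ for all pairwise distinct $p,q,r\in W$; $\varphi_c(x)=\sum_{pq\in P_W}c_{pq}x_{pq}$ for $c\in\mathbb{R}^{P_W}$. A partial function $\tilde x$ on $P_W$ is a map from $\operatorname{dom}(\tilde x)\subseteq P_W$ to $\{0,1\}$, and $X_W[\tilde x]=\{x\in X_W\mid x_{pq}=\tilde x_{pq}\ \forall pq\in\operatorname{dom}(\tilde x)\}$. A pair $pq$ is decided if $x_{pq}=x'_{pq}$ for all $x,x'\in X_W[\tilde x]$; $\tilde x$ is maximally specific if $X_W[\tilde x]\ne\emptyset$ and the decided pairs are exactly $\operatorname{dom}(\tilde x)$. $\hat x|_{P_U}$ is the partial function on $P_U$ with domain $\operatorname{dom}(\hat x)\cap P_U$ agreeing with $\hat x$; $c|_{P_U}$ and $x|_{P_U}$ are restrictions. $\delta(U)=(U\times(V\setminus U))\cup((V\setminus U)\times U)$. *)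

theory Defs
  imports Complex_Main
begin

definition PP :: "'a set \<Rightarrow> ('a \<times> 'a) set" where
  "PP W = {(p, q). p \<in> W \<and> q \<in> W \<and> p \<noteq> q}"

text \<open>X_W: 0/1 vectors indexed by PP W (represented extensionally: value 0 outside PP W)
  satisfying the triangle inequalities.\<close>
definition XX :: "'a set \<Rightarrow> ('a \<times> 'a \<Rightarrow> real) set" where
  "XX W = {x. (\<forall>pq \<in> PP W. x pq = 0 \<or> x pq = 1) \<and> (\<forall>pq. pq \<notin> PP W \<longrightarrow> x pq = 0) \<and>
     (\<forall>p \<in> W. \<forall>q \<in> W. \<forall>r \<in> W. p \<noteq> q \<and> q \<noteq> r \<and> p \<noteq> r \<longrightarrow>
        x (p, q) + x (q, r) - x (p, r) \<le> 1)}"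

definition phi :: "'a set \<Rightarrow> ('a \<times> 'a \<Rightarrow> real) \<Rightarrow> ('a \<times> 'a \<Rightarrow> real) \<Rightarrow> real" where
  "phi W c x = (\<Sum>pq \<in> PP W. c pq * x pq)"

definition partial_fn :: "'a set \<Rightarrow> ('a \<times> 'a \<rightharpoonup> real) \<Rightarrow> bool" where
  "partial_fn W xt \<longleftrightarrow> dom xt \<subseteq> PP W \<and> ran xt \<subseteq> {0, 1}"

definition XXfix :: "'a set \<Rightarrow> ('a \<times> 'a \<rightharpoonup> real) \<Rightarrow> ('a \<times> 'a \<Rightarrow> real) set" where
  "XXfix W xt = {x \<in> XX W. \<forall>pq \<in> dom xt. xt pq = Some (x pq)}"

definition decided :: "'a set \<Rightarrow> ('a \<times> 'a \<rightharpoonup> real) \<Rightarrow> 'a \<times> 'a \<Rightarrow> bool" where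
  "decided W xt pq \<longleftrightarrow> (\<forall>x \<in> XXfix W xt. \<forall>x' \<in> XXfix W xt. x pq = x' pq)"

definition maximally_specific :: "'a set \<Rightarrow> ('a \<times> 'a \<rightharpoonup> real) \<Rightarrow> bool" where
  "maximally_specific W xt \<longleftrightarrow> partial_fn W xt \<and> XXfix W xt \<noteq> {} \<and>
     {pq \<in> PP W. decided W xt pq} = dom xt"

definition cut :: "'a set \<Rightarrow> 'a set \<Rightarrow> ('a \<times> 'a) set" where
  "cut V U = (U \<times> (V - U)) \<union> ((V - U) \<times> U)"

end

theory Submission
  imports Defs
begin

text \<open>Let \<open>x\<^sub>0\<close> maximize \<open>\<phi>\<^sub>c\<close> over \<open>X\<^sub>V[x\<^sub>h]\<close>. If \<open>x\<^sub>0\<close> has the wrong value \<open>1 - b\<close>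
  at \<open>ij\<close>, then \<open>\<tau>(x\<^sub>0)\<close> differs from \<open>x\<^sub>0\<close> only inside \<open>P\<^sub>U\<close>, where it equals \<open>y\<close>, and
  on the cut \<open>\<delta>(U)\<close>. Hence \<open>\<phi>\<^sub>c(x\<^sub>0) - \<phi>\<^sub>c(\<tau>(x\<^sub>0))\<close> is the loss on \<open>P\<^sub>U\<close>, at most
  \<open>ub - lb\<close>, plus the loss on the cut, at most \<open>ub'\<close>; so \<open>\<tau>(x\<^sub>0)\<close> is again a
  maximizer, and its value at \<open>ij\<close> is \<open>y\<^sub>i\<^sub>j = b\<close>.\<close>

lemma PP_mono: "U \<subseteq> V \<Longrightarrow> PP U \<subseteq> PP V"
  by (auto simp: PP_def)

lemma finite_PP: "finite W \<Longrightarrow> finite (PP W)"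
  by (rule finite_subset[of _ "W \<times> W"]) (auto simp: PP_def)

lemma PP_decompose:
  assumes "U \<subseteq> V"
  shows "PP V = PP U \<union> PP (V - U) \<union> cut V U"
    and "PP U \<inter> PP (V - U) = {}"
    and "(PP U \<union> PP (V - U)) \<inter> cut V U = {}"
  using assms by (auto simp: PP_def cut_def)

lemma XX_binary: "x \<in> XX W \<Longrightarrow> pq \<in> PP W \<Longrightarrow> x pq = 0 \<or> x pq = 1"
  by (auto simp: XX_def)

lemma XX_other_value:
  "x \<in> XX W \<Longrightarrow> pq \<in> PP W \<Longrightarrow> b \<in> {0, 1} \<Longrightarrow> x pq \<noteq> b \<Longrightarrow> x pq = 1 - b"
  using XX_binary by fastforce

lemma XX_triangle:
  "x \<in> XX W \<Longrightarrow> p \<in> W \<Longrightarrow> q \<in> W \<Longrightarrow> r \<in> W \<Longrightarrow> p \<noteq> q \<Longrightarrow> q \<noteq> r \<Longrightarrow> p \<noteq> r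
    \<Longrightarrow> x (p, q) + x (q, r) - x (p, r) \<le> 1"
  unfolding XX_def by blast

lemma XX_zero_outside: "x \<in> XX W \<Longrightarrow> pq \<notin> PP W \<Longrightarrow> x pq = 0"
  unfolding XX_def by (cases pq) blast

lemma finite_XX:
  assumes "finite W"
  shows "finite (XX W)"
proof -
  let ?indicator = "\<lambda>S pq. if pq \<in> S then 1 else 0 :: real"
  have "XX W \<subseteq> ?indicator ` Pow (PP W)"
  proof
    fix x assume x: "x \<in> XX W"
    have "x = ?indicator {pq \<in> PP W. x pq = 1}"
    proof
      fix pq
      show "x pq = ?indicator {pq \<in> PP W. x pq = 1} pq"
        using XX_binary[OF x, of pq] XX_zero_outside[OF x, of pq] by auto
    qed
    then show "x \<in> ?indicator ` Pow (PP W)"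
      by (rule image_eqI) blast
  qed
  then show ?thesis
    by (rule finite_subset) (simp add: finite_PP[OF assms])
qed

lemma finite_XXfix: "finite W \<Longrightarrow> finite (XXfix W xt)"
  by (rule finite_subset[OF _ finite_XX]) (auto simp: XXfix_def)

definition restrict_pairs :: "'a set \<Rightarrow> ('a \<times> 'a \<Rightarrow> real) \<Rightarrow> 'a \<times> 'a \<Rightarrow> real" where
  "restrict_pairs U x pq = (if pq \<in> PP U then x pq else 0)"

lemma restrict_pairs_XX:
  assumes "U \<subseteq> V" and "x \<in> XX V"
  shows "restrict_pairs U x \<in> XX U"
proof -
  have binary: "\<forall>pq \<in> PP U. restrict_pairs U x pq = 0 \<or> restrict_pairs U x pq = 1"
    using XX_binary[OF assms(2)] PP_mono[OF assms(1)] by (auto simp: restrict_pairs_def)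
  have triangle: "\<forall>p \<in> U. \<forall>q \<in> U. \<forall>r \<in> U. p \<noteq> q \<and> q \<noteq> r \<and> p \<noteq> r \<longrightarrow>
      restrict_pairs U x (p, q) + restrict_pairs U x (q, r) - restrict_pairs U x (p, r) \<le> 1"
  proof (intro ballI impI)
    fix p q r assume "p \<in> U" "q \<in> U" "r \<in> U" and distinct: "p \<noteq> q \<and> q \<noteq> r \<and> p \<noteq> r"
    moreover from this have "x (p, q) + x (q, r) - x (p, r) \<le> 1"
      using assms(1) by (intro XX_triangle[OF assms(2)]) auto
    ultimately show
      "restrict_pairs U x (p, q) + restrict_pairs U x (q, r) - restrict_pairs U x (p, r) \<le> 1"
      by (simp add: restrict_pairs_def PP_def)
  qed
  show ?thesis
    unfolding XX_def mem_Collect_eq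
  proof (intro conjI)
    show "\<forall>pq. pq \<notin> PP U \<longrightarrow> restrict_pairs U x pq = 0"
      by (simp add: restrict_pairs_def)
  qed (fact binary triangle)+
qed

lemma restrict_pairs_XXfix:
  assumes "U \<subseteq> V" and "x \<in> XXfix V xt"
  shows "restrict_pairs U x \<in> XXfix U (xt |` PP U)"
  using assms restrict_pairs_XX[OF assms(1)]
  by (auto simp: XXfix_def restrict_map_def restrict_pairs_def split: if_splits)

lemma phi_restrict_pairs: "phi U c (restrict_pairs U x) = phi U c x"
  by (simp add: phi_def restrict_pairs_def)

lemma phi_diff_decompose:
  assumes "finite V" and "U \<subseteq> V"
    and outside: "\<forall>pq \<in> PP (V - U). z pq = x pq"
    and inside: "\<forall>pq \<in> PP U. z pq = y pq"
  shows "phi V c x - phi V c z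
           = phi U c x - phi U c y + (\<Sum>pq \<in> cut V U. c pq * (x pq - z pq))"
proof -
  let ?d = "\<lambda>pq. c pq * (x pq - z pq)"
  have "finite U" using assms(1,2) finite_subset by blast
  then have finite: "finite (PP U)" "finite (PP (V - U))" "finite (cut V U)"
    using assms(1) finite_PP by (auto simp: cut_def)
  have "phi V c x - phi V c z = sum ?d (PP V)"
    by (simp add: phi_def right_diff_distrib sum_subtractf)
  also have "\<dots> = sum ?d (PP U) + sum ?d (PP (V - U)) + sum ?d (cut V U)"
    using finite PP_decompose[OF assms(2)] by (simp add: sum.union_disjoint)
  also have "sum ?d (PP (V - U)) = 0"
    using outside by simp
  also have "sum ?d (PP U) = (\<Sum>pq \<in> PP U. c pq * (x pq - y pq))"
    using inside by (intro sum.cong) auto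
  also have "\<dots> = phi U c x - phi U c y"
    by (simp add: phi_def right_diff_distrib sum_subtractf)
  finally show ?thesis by simp
qed

lemma ex_maximizer:
  fixes f :: "'b \<Rightarrow> 'c::linorder"
  assumes "finite S" and "S \<noteq> {}"
  obtains x where "x \<in> S" and "\<forall>x' \<in> S. f x' \<le> f x"
proof -
  have "Max (f ` S) \<in> f ` S"
    using assms by simp
  then obtain x where "x \<in> S" and "f x = Max (f ` S)"
    by auto
  moreover have "\<forall>x' \<in> S. f x' \<le> Max (f ` S)"
    using assms(1) by simp
  ultimately show ?thesis using that by simp
qed

theorem proposition6p7:
  fixes V U :: "'a set" and c :: "'a \<times> 'a \<Rightarrow> real" and xh :: "'a \<times> 'a \<rightharpoonup> real"
    and i j :: 'a and b :: real and y :: "'a \<times> 'a \<Rightarrow> real"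
    and \<tau> :: "('a \<times> 'a \<Rightarrow> real) \<Rightarrow> ('a \<times> 'a \<Rightarrow> real)" and lb ub ub' :: real
  assumes "finite V" and "V \<noteq> {}"
    and "maximally_specific V xh"
    and "U \<subseteq> V"
    and "(i, j) \<in> PP U - dom xh"
    and "b \<in> {0, 1}"
    and y_in: "y \<in> XXfix U (xh |` PP U)" and "y (i, j) = b"
    and y_max: "\<forall>x' \<in> XXfix U (xh |` PP U). x' (i, j) = b \<longrightarrow> phi U c x' \<le> phi U c y"
    and tau_maps: "\<forall>x \<in> XXfix V xh. \<tau> x \<in> XXfix V xh"
    and tau_out: "\<forall>x \<in> XXfix V xh. \<forall>pq \<in> PP (V - U). \<tau> x pq = x pq"
    and tau_in: "\<forall>x \<in> XXfix V xh. \<forall>pq \<in> PP U. \<tau> x pq = y pq"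
    and lb: "lb \<le> Max (phi U c ` {x \<in> XXfix U (xh |` PP U). x (i, j) = b})"
    and ub: "\<forall>x \<in> XXfix U (xh |` PP U). x (i, j) = 1 - b \<longrightarrow> phi U c x \<le> ub"
    and ub': "\<forall>x \<in> XXfix V xh. x (i, j) = 1 - b \<longrightarrow>
               (\<Sum>pq \<in> cut V U. c pq * (x pq - \<tau> x pq)) \<le> ub'"
    and "lb - ub \<ge> ub'"
  shows "\<exists>xs \<in> XXfix V xh. (\<forall>x \<in> XXfix V xh. phi V c x \<le> phi V c xs) \<and> xs (i, j) = b"
proof -
  have "XXfix V xh \<noteq> {}"
    using \<open>maximally_specific V xh\<close> by (simp add: maximally_specific_def)
  then obtain x0 where x0: "x0 \<in> XXfix V xh"
    and x0_max: "\<forall>x \<in> XXfix V xh. phi V c x \<le> phi V c x0"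
    using ex_maximizer[OF finite_XXfix[OF \<open>finite V\<close>]] by blast
  show ?thesis
  proof (cases "x0 (i, j) = b")
    case True
    then show ?thesis using x0 x0_max by blast
  next
    case False
    have "x0 \<in> XX V" using x0 by (simp add: XXfix_def)
    moreover have "(i, j) \<in> PP V" using assms(5) PP_mono[OF \<open>U \<subseteq> V\<close>] by blast
    ultimately have x0_ij: "x0 (i, j) = 1 - b"
      using XX_other_value \<open>b \<in> {0, 1}\<close> False by blast
    have "restrict_pairs U x0 (i, j) = 1 - b"
      using x0_ij assms(5) by (simp add: restrict_pairs_def)
    then have "phi U c (restrict_pairs U x0) \<le> ub"
      using ub restrict_pairs_XXfix[OF \<open>U \<subseteq> V\<close> x0] by blast
    then have "phi U c x0 \<le> ub"
      by (simp only: phi_restrict_pairs)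
    moreover have "Max (phi U c ` {x \<in> XXfix U (xh |` PP U). x (i, j) = b}) = phi U c y"
      using finite_XXfix[of U] finite_subset[OF \<open>U \<subseteq> V\<close> \<open>finite V\<close>]
        y_in \<open>y (i, j) = b\<close> y_max
      by (intro Max_eqI) auto
    moreover have "phi V c x0 - phi V c (\<tau> x0)
        = phi U c x0 - phi U c y + (\<Sum>pq \<in> cut V U. c pq * (x0 pq - \<tau> x0 pq))"
      using phi_diff_decompose[OF \<open>finite V\<close> \<open>U \<subseteq> V\<close>] tau_out tau_in x0 by blast
    moreover have "(\<Sum>pq \<in> cut V U. c pq * (x0 pq - \<tau> x0 pq)) \<le> ub'"
      using ub' x0 x0_ij by blast
    ultimately have "phi V c x0 \<le> phi V c (\<tau> x0)"
      using lb \<open>lb - ub \<ge> ub'\<close> by linarith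
    then show ?thesis
      using x0 x0_max tau_maps tau_in assms(5) \<open>y (i, j) = b\<close> by force
  qed
qed

end
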